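(* Let $(\Omega,\mu)$ be a measure space and let $Y$ be a uniformly monotone Banach function space on $(\Omega,\mu)$, with $\delta$ a function witnessing uniform monotonicity of $Y$. Let $0<\varepsilon<1$. Assume that $f_1$ and $f_2$ are positive elements of $Y$ such that $$\Vert f_1+f_2\Vert\le 1 \quad\text{and}\quad \frac{1}{1+\delta(\varepsilon/3)}\le \Vert f_1-f_2\Vert.$$ Then there are two positive functions $h_1,h_2\in Y$ with disjoint supports such that $\Vert h_1+h_2\Vert=1$ and $\Vert h_i-f_i\Vert<\varepsilon$ for $i=1,2$.
   Context: Let $L^0(\mu)$ denote the space of ($\mu$-a.e. equivalence classes of) real valued measurable functions on $\Omega$. A Banach space $X$ is a Banach function space on $(\Omega,\mu)$ if $X$ is an ideal in $L^0(\mu)$ and whenever $x,y\in X$ with $|x|\le|y|$ a.e., then $\Vert x\Vert\le\Vert y\Vert$. A Banach lattice $E$ is uniformly monotone if for every $\varepsilon>0$ there is $\delta(\varepsilon)>0$ such that whenever $x\in E$ with $\Vert x\Vert=1$, $y\in E$, $x,y\ge 0$, the condition $\Vert x+y\Vert\le 1+\delta(\varepsilon)$ implies $\Vert y\Vert\le\varepsilon$; such a function $\delta$ is said to witness (be a modulus of) uniform monotonicity. All spaces are real. *)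

theory Defs
  imports "HOL-Analysis.Analysis"
begin

text \<open>A Banach function space on the measure space M is represented by a set X of
real-valued measurable functions (representatives of a.e.-classes) together with a
function N giving the norm. Elements that agree a.e. are identified through the
norm: the norm N is a seminorm on representatives that vanishes exactly on
functions that are 0 a.e.; the lattice monotonicity of the norm forces N to be
invariant under a.e. equality.\<close>

definition banach_function_space ::
  "'a measure \<Rightarrow> ('a \<Rightarrow> real) set \<Rightarrow> (('a \<Rightarrow> real) \<Rightarrow> real) \<Rightarrow> bool" where
  "banach_function_space M X N \<longleftrightarrow>
     X \<subseteq> borel_measurable M
   \<and> (\<lambda>x. 0) \<in> X
   \<and> (\<forall>f\<in>X. \<forall>g\<in>X. (\<lambda>x. f x + g x) \<in> X)
   \<and> (\<forall>f\<in>X. \<forall>c::real. (\<lambda>x. c * f x) \<in> X)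
   \<and> (\<forall>f\<in>X. \<forall>g\<in>X. N (\<lambda>x. f x + g x) \<le> N f + N g)
   \<and> (\<forall>f\<in>X. \<forall>c::real. N (\<lambda>x. c * f x) = \<bar>c\<bar> * N f)
   \<and> (\<forall>f\<in>X. N f = 0 \<longleftrightarrow> (AE x in M. f x = 0))
   \<and> (\<forall>s. (\<forall>n. s n \<in> X) \<and>
          (\<forall>e>0. \<exists>n0. \<forall>m\<ge>n0. \<forall>n\<ge>n0. N (\<lambda>x. s m x - s n x) < e)
        \<longrightarrow> (\<exists>f\<in>X. (\<lambda>n. N (\<lambda>x. s n x - f x)) \<longlonglongrightarrow> 0))
   \<and> (\<forall>f\<in>borel_measurable M. \<forall>g\<in>X. (AE x in M. \<bar>f x\<bar> \<le> \<bar>g x\<bar>) \<longrightarrow> f \<in> X)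
   \<and> (\<forall>f\<in>X. \<forall>g\<in>X. (AE x in M. \<bar>f x\<bar> \<le> \<bar>g x\<bar>) \<longrightarrow> N f \<le> N g)"

definition uniformly_monotone_modulus ::
  "'a measure \<Rightarrow> ('a \<Rightarrow> real) set \<Rightarrow> (('a \<Rightarrow> real) \<Rightarrow> real) \<Rightarrow> (real \<Rightarrow> real) \<Rightarrow> bool" where
  "uniformly_monotone_modulus M X N \<delta> \<longleftrightarrow>
     (\<forall>\<epsilon>>0. \<delta> \<epsilon> > 0 \<and>
        (\<forall>x\<in>X. \<forall>y\<in>X. (AE t in M. x t \<ge> 0) \<and> (AE t in M. y t \<ge> 0) \<and> N x = 1
            \<and> N (\<lambda>t. x t + y t) \<le> 1 + \<delta> \<epsilon> \<longrightarrow> N y \<le> \<epsilon>))"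

end

theory Submission
  imports Defs
begin

text \<open>Put \<open>a = \<parallel>f\<^sub>1 - f\<^sub>2\<parallel>\<close> and \<open>h\<^sub>i = (f\<^sub>i - f\<^sub>j)\<^sup>+ / a\<close>. These are disjoint and
  \<open>h\<^sub>1 + h\<^sub>2 = |f\<^sub>1 - f\<^sub>2| / a\<close> has norm one. Uniform monotonicity, applied to this unit
  vector and to \<open>2 min(f\<^sub>1, f\<^sub>2) / a\<close>, whose sum \<open>(f\<^sub>1 + f\<^sub>2) / a\<close> has norm at most
  \<open>1 / a \<le> 1 + \<delta>(\<epsilon>/3)\<close>, makes \<open>min(f\<^sub>1, f\<^sub>2)\<close> small. Applied to a unit vector and a
  multiple of itself it gives \<open>\<delta>(\<eta>) \<le> \<eta>\<close>, so \<open>a \<ge> 1 / (1 + \<delta>(\<epsilon>/3))\<close> is close to one.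
  Finally \<open>h\<^sub>i - f\<^sub>i = (1/a - 1) (f\<^sub>i - f\<^sub>j)\<^sup>+ - min(f\<^sub>1, f\<^sub>2)\<close>.\<close>

lemma uniformly_monotone_modulus_pos:
  "uniformly_monotone_modulus M Y N \<delta> \<Longrightarrow> 0 < \<epsilon> \<Longrightarrow> 0 < \<delta> \<epsilon>"
  unfolding uniformly_monotone_modulus_def by blast

lemma uniformly_monotone_modulusD:
  assumes "uniformly_monotone_modulus M Y N \<delta>" and "0 < \<epsilon>" and "x \<in> Y" and "y \<in> Y"
    and "AE t in M. 0 \<le> x t" and "AE t in M. 0 \<le> y t" and "N x = 1"
    and "N (\<lambda>t. x t + y t) \<le> 1 + \<delta> \<epsilon>"
  shows "N y \<le> \<epsilon>"
  using assms unfolding uniformly_monotone_modulus_def by blast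

locale bfs =
  fixes M :: "'a measure" and Y :: "('a \<Rightarrow> real) set" and N :: "('a \<Rightarrow> real) \<Rightarrow> real"
  assumes bfs: "banach_function_space M Y N"
begin

lemma mem_borel_measurable:
  assumes "f \<in> Y"
  shows "f \<in> borel_measurable M"
proof -
  have "Y \<subseteq> borel_measurable M"
    using bfs unfolding banach_function_space_def by (elim conjE)
  then show ?thesis
    using assms by blast
qed

lemma add_mem:
  assumes "f \<in> Y" and "g \<in> Y"
  shows "(\<lambda>x. f x + g x) \<in> Y"
proof -
  have "\<forall>f\<in>Y. \<forall>g\<in>Y. (\<lambda>x. f x + g x) \<in> Y"
    using bfs unfolding banach_function_space_def by (elim conjE)
  then show ?thesis
    using assms by blast
qed

lemma scale_mem:
  assumes "f \<in> Y"
  shows "(\<lambda>x. c * f x) \<in> Y"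
proof -
  have "\<forall>f\<in>Y. \<forall>c::real. (\<lambda>x. c * f x) \<in> Y"
    using bfs unfolding banach_function_space_def by (elim conjE)
  then show ?thesis
    using assms by blast
qed

lemma dominated_mem:
  assumes "f \<in> borel_measurable M" and "g \<in> Y" and "\<And>x. \<bar>f x\<bar> \<le> \<bar>g x\<bar>"
  shows "f \<in> Y"
proof -
  have "\<forall>f\<in>borel_measurable M. \<forall>g\<in>Y. (AE x in M. \<bar>f x\<bar> \<le> \<bar>g x\<bar>) \<longrightarrow> f \<in> Y"
    using bfs unfolding banach_function_space_def by (elim conjE)
  moreover have "AE x in M. \<bar>f x\<bar> \<le> \<bar>g x\<bar>"
    using assms(3) by simp
  ultimately show ?thesis
    using assms(1,2) by blast
qed

lemma N_triangle:
  assumes "f \<in> Y" and "g \<in> Y"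
  shows "N (\<lambda>x. f x + g x) \<le> N f + N g"
proof -
  have "\<forall>f\<in>Y. \<forall>g\<in>Y. N (\<lambda>x. f x + g x) \<le> N f + N g"
    using bfs unfolding banach_function_space_def by (elim conjE)
  then show ?thesis
    using assms by blast
qed

lemma N_homogeneous:
  assumes "f \<in> Y"
  shows "N (\<lambda>x. c * f x) = \<bar>c\<bar> * N f"
proof -
  have "\<forall>f\<in>Y. \<forall>c::real. N (\<lambda>x. c * f x) = \<bar>c\<bar> * N f"
    using bfs unfolding banach_function_space_def by (elim conjE)
  then show ?thesis
    using assms by blast
qed

lemma N_mono:
  assumes "f \<in> Y" and "g \<in> Y" and "AE x in M. \<bar>f x\<bar> \<le> \<bar>g x\<bar>"
  shows "N f \<le> N g"
proof -
  have "\<forall>f\<in>Y. \<forall>g\<in>Y. (AE x in M. \<bar>f x\<bar> \<le> \<bar>g x\<bar>) \<longrightarrow> N f \<le> N g"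
    using bfs unfolding banach_function_space_def by (elim conjE)
  then show ?thesis
    using assms by blast
qed

lemma N_cong_abs: "f \<in> Y \<Longrightarrow> g \<in> Y \<Longrightarrow> (\<And>x. \<bar>f x\<bar> = \<bar>g x\<bar>) \<Longrightarrow> N f = N g"
  by (intro antisym N_mono) auto

lemma abs_mem:
  assumes "f \<in> Y"
  shows "(\<lambda>x. \<bar>f x\<bar>) \<in> Y"
proof (rule dominated_mem[OF _ assms])
  show "(\<lambda>x. \<bar>f x\<bar>) \<in> borel_measurable M"
    using mem_borel_measurable[OF assms] by measurable
qed simp

lemma diff_mem: "f \<in> Y \<Longrightarrow> g \<in> Y \<Longrightarrow> (\<lambda>x. f x - g x) \<in> Y"
  using add_mem[OF _ scale_mem, of f g "-1"] by simp

lemma min_mem: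
  assumes "f \<in> Y" and "g \<in> Y"
  shows "(\<lambda>x. min (f x) (g x)) \<in> Y"
proof (rule dominated_mem[where g = "\<lambda>x. \<bar>f x\<bar> + \<bar>g x\<bar>"])
  show "(\<lambda>x. min (f x) (g x)) \<in> borel_measurable M"
    using mem_borel_measurable[OF assms(1)] mem_borel_measurable[OF assms(2)] by measurable
  show "(\<lambda>x. \<bar>f x\<bar> + \<bar>g x\<bar>) \<in> Y"
    using assms by (intro add_mem abs_mem)
qed auto

lemma positive_part_diff_mem:
  assumes "f \<in> Y" and "g \<in> Y"
  shows "(\<lambda>x. max (f x - g x) 0) \<in> Y"
proof (rule dominated_mem[OF _ diff_mem[OF assms]])
  show "(\<lambda>x. max (f x - g x) 0) \<in> borel_measurable M"
    using mem_borel_measurable[OF assms(1)] mem_borel_measurable[OF assms(2)] by measurable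
qed auto

lemma abs_diff_mem: "f \<in> Y \<Longrightarrow> g \<in> Y \<Longrightarrow> (\<lambda>x. \<bar>f x - g x\<bar>) \<in> Y"
  by (intro abs_mem diff_mem)

lemma N_abs_diff: "f \<in> Y \<Longrightarrow> g \<in> Y \<Longrightarrow> N (\<lambda>x. \<bar>f x - g x\<bar>) = N (\<lambda>x. f x - g x)"
  by (intro N_cong_abs abs_diff_mem diff_mem) auto

lemma N_diff_commute: "f \<in> Y \<Longrightarrow> g \<in> Y \<Longrightarrow> N (\<lambda>x. g x - f x) = N (\<lambda>x. f x - g x)"
  by (intro N_cong_abs diff_mem) auto

lemma normalized_abs_diff:
  assumes "f \<in> Y" and "g \<in> Y" and "0 < N (\<lambda>x. f x - g x)"
  defines "u \<equiv> \<lambda>x. 1 / N (\<lambda>x. f x - g x) * \<bar>f x - g x\<bar>"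
  shows "u \<in> Y" and "N u = 1"
proof -
  show "u \<in> Y"
    unfolding u_def using assms(1,2) by (intro scale_mem abs_diff_mem)
  show "N u = 1"
    unfolding u_def N_homogeneous[OF abs_diff_mem[OF assms(1,2)]] N_abs_diff[OF assms(1,2)]
    using assms(3) by simp
qed

lemma N_diff_le_N_add:
  assumes "f1 \<in> Y" and "f2 \<in> Y" and "AE x in M. 0 \<le> f1 x" and "AE x in M. 0 \<le> f2 x"
  shows "N (\<lambda>x. f1 x - f2 x) \<le> N (\<lambda>x. f1 x + f2 x)"
proof -
  have "AE x in M. \<bar>f1 x - f2 x\<bar> \<le> \<bar>f1 x + f2 x\<bar>"
    using assms(3,4) by eventually_elim simp
  then show ?thesis
    using assms(1,2) by (intro N_mono diff_mem add_mem)
qed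

lemma normalized_positive_parts:
  assumes "f1 \<in> Y" and "f2 \<in> Y" and "0 < N (\<lambda>x. f1 x - f2 x)"
  defines "h1 \<equiv> \<lambda>x. 1 / N (\<lambda>x. f1 x - f2 x) * max (f1 x - f2 x) 0"
    and "h2 \<equiv> \<lambda>x. 1 / N (\<lambda>x. f1 x - f2 x) * max (f2 x - f1 x) 0"
  shows "h1 \<in> Y" and "h2 \<in> Y" and "AE x in M. 0 \<le> h1 x" and "AE x in M. 0 \<le> h2 x"
    and "AE x in M. h1 x = 0 \<or> h2 x = 0" and "N (\<lambda>x. h1 x + h2 x) = 1"
proof -
  show "h1 \<in> Y" "h2 \<in> Y"
    unfolding h1_def h2_def by (intro scale_mem positive_part_diff_mem assms(1,2))+
  show "AE x in M. 0 \<le> h1 x" "AE x in M. 0 \<le> h2 x"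
    using assms(3) by (simp_all add: h1_def h2_def)
  show "AE x in M. h1 x = 0 \<or> h2 x = 0"
    by (simp add: h1_def h2_def max_def)
  have "(\<lambda>x. h1 x + h2 x) = (\<lambda>x. 1 / N (\<lambda>x. f1 x - f2 x) * \<bar>f1 x - f2 x\<bar>)"
    by (auto simp: h1_def h2_def max_def field_simps)
  then show "N (\<lambda>x. h1 x + h2 x) = 1"
    using normalized_abs_diff[OF assms(1-3)] by simp
qed

lemma modulus_le:
  assumes "uniformly_monotone_modulus M Y N \<delta>" and "0 < \<epsilon>"
    and "x \<in> Y" and "AE t in M. 0 \<le> x t" and "N x = 1"
  shows "\<delta> \<epsilon> \<le> \<epsilon>"
proof -
  have pos: "0 < \<delta> \<epsilon>"
    using assms(1,2) by (rule uniformly_monotone_modulus_pos)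
  have "N (\<lambda>t. x t + \<delta> \<epsilon> * x t) = N (\<lambda>t. (1 + \<delta> \<epsilon>) * x t)"
    by (simp add: algebra_simps)
  also have "\<dots> = 1 + \<delta> \<epsilon>"
    using pos assms(5) unfolding N_homogeneous[OF assms(3)] by simp
  finally have "N (\<lambda>t. x t + \<delta> \<epsilon> * x t) \<le> 1 + \<delta> \<epsilon>"
    by simp
  moreover have "AE t in M. 0 \<le> \<delta> \<epsilon> * x t"
    using assms(4) by eventually_elim (use pos in simp)
  moreover have "(\<lambda>t. \<delta> \<epsilon> * x t) \<in> Y"
    using assms(3) by (rule scale_mem)
  ultimately have "N (\<lambda>t. \<delta> \<epsilon> * x t) \<le> \<epsilon>"
    using uniformly_monotone_modulusD[OF assms(1,2,3)] assms(4,5) by blast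
  then show ?thesis
    using pos assms(5) unfolding N_homogeneous[OF assms(3)] by simp
qed

lemma one_sub_N_diff_le:
  assumes "uniformly_monotone_modulus M Y N \<delta>" and "0 < \<eta>" and "f1 \<in> Y" and "f2 \<in> Y"
    and "N (\<lambda>x. f1 x - f2 x) \<le> 1" and "1 / (1 + \<delta> \<eta>) \<le> N (\<lambda>x. f1 x - f2 x)"
  shows "1 - N (\<lambda>x. f1 x - f2 x) \<le> \<eta>"
proof -
  define a where "a = N (\<lambda>x. f1 x - f2 x)"
  have \<delta>_pos: "0 < \<delta> \<eta>"
    using assms(1,2) by (rule uniformly_monotone_modulus_pos)
  then have a_pos: "0 < a"
    using assms(6) unfolding a_def by (simp add: less_le_trans[rotated])
  have "AE x in M. 0 \<le> 1 / a * \<bar>f1 x - f2 x\<bar>"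
    using a_pos by simp
  then have "\<delta> \<eta> \<le> \<eta>"
    using modulus_le[OF assms(1,2)] normalized_abs_diff[OF assms(3,4)] a_pos unfolding a_def by blast
  moreover have "1 \<le> a * (1 + \<delta> \<eta>)"
    using assms(6) \<delta>_pos by (simp add: a_def field_simps)
  moreover have "a * \<delta> \<eta> \<le> \<delta> \<eta>"
    using a_pos assms(5) \<delta>_pos by (simp add: a_def mult_left_le_one_le)
  ultimately show ?thesis
    by (simp add: a_def algebra_simps)
qed

lemma N_min_le_modulus:
  assumes "uniformly_monotone_modulus M Y N \<delta>" and "0 < \<eta>"
    and "f1 \<in> Y" and "f2 \<in> Y" and "AE x in M. 0 \<le> f1 x" and "AE x in M. 0 \<le> f2 x"
    and "N (\<lambda>x. f1 x + f2 x) \<le> 1"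
    and "1 / (1 + \<delta> \<eta>) \<le> N (\<lambda>x. f1 x - f2 x)"
  shows "N (\<lambda>x. min (f1 x) (f2 x)) \<le> \<eta> / 2"
proof -
  define a where "a = N (\<lambda>x. f1 x - f2 x)"
  define u where "u = (\<lambda>x. 1 / a * \<bar>f1 x - f2 x\<bar>)"
  define v where "v = (\<lambda>x. 2 / a * min (f1 x) (f2 x))"
  have \<delta>_pos: "0 < \<delta> \<eta>"
    using assms(1,2) by (rule uniformly_monotone_modulus_pos)
  then have a_pos: "0 < a"
    using assms(8) unfolding a_def by (simp add: less_le_trans[rotated])
  have u: "u \<in> Y" "N u = 1"
    using normalized_abs_diff[OF assms(3,4)] a_pos unfolding u_def a_def by simp_all
  have min_Y: "(\<lambda>x. min (f1 x) (f2 x)) \<in> Y"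
    using assms(3,4) by (rule min_mem)
  have "(\<lambda>x. u x + v x) = (\<lambda>x. 1 / a * (f1 x + f2 x))"
    using a_pos by (auto simp: u_def v_def min_def abs_if field_simps)
  then have "N (\<lambda>x. u x + v x) = N (\<lambda>x. 1 / a * (f1 x + f2 x))"
    by simp
  also have "\<dots> = 1 / a * N (\<lambda>x. f1 x + f2 x)"
    using a_pos unfolding N_homogeneous[OF add_mem[OF assms(3,4)]] by simp
  also have "\<dots> \<le> 1 / a"
    using assms(7) a_pos by (simp add: divide_right_mono)
  also have "\<dots> \<le> 1 + \<delta> \<eta>"
    using assms(8) a_pos \<delta>_pos unfolding a_def by (simp add: field_simps)
  finally have "N (\<lambda>x. u x + v x) \<le> 1 + \<delta> \<eta>" .
  moreover have "AE x in M. 0 \<le> v x"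
    using assms(5,6) by eventually_elim (use a_pos in \<open>simp add: v_def\<close>)
  moreover have "AE x in M. 0 \<le> u x"
    using a_pos by (simp add: u_def)
  moreover have "v \<in> Y"
    unfolding v_def by (rule scale_mem[OF min_Y])
  ultimately have "N v \<le> \<eta>"
    using uniformly_monotone_modulusD[OF assms(1,2) u(1)] u(2) by blast
  have "a \<le> 1"
    using N_diff_le_N_add[OF assms(3-6)] assms(7) unfolding a_def by simp
  have "N (\<lambda>x. min (f1 x) (f2 x)) = a / 2 * N v"
    using a_pos unfolding v_def N_homogeneous[OF min_Y] by simp
  also have "\<dots> \<le> a / 2 * \<eta>"
    using \<open>N v \<le> \<eta>\<close> a_pos by (simp add: mult_left_mono)
  also have "\<dots> \<le> \<eta> / 2"
    using \<open>a \<le> 1\<close> assms(2) mult_right_le_one_le[of \<eta> a] a_pos by simp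
  finally show ?thesis .
qed

lemma N_positive_part_sub_le:
  assumes "f1 \<in> Y" and "f2 \<in> Y"
    and "0 < N (\<lambda>x. f1 x - f2 x)" and "N (\<lambda>x. f1 x - f2 x) \<le> 1"
  shows "N (\<lambda>x. 1 / N (\<lambda>x. f1 x - f2 x) * max (f1 x - f2 x) 0 - f1 x)
           \<le> 1 - N (\<lambda>x. f1 x - f2 x) + N (\<lambda>x. min (f1 x) (f2 x))"
proof -
  define a where "a = N (\<lambda>x. f1 x - f2 x)"
  define u where "u = (\<lambda>x. max (f1 x - f2 x) 0)"
  define m where "m = (\<lambda>x. min (f1 x) (f2 x))"
  have a: "0 < a" "0 \<le> 1 / a - 1"
    using assms(3,4) by (simp_all add: a_def)
  have u: "u \<in> Y" and m: "m \<in> Y"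
    using assms(1,2) by (simp_all add: u_def m_def positive_part_diff_mem min_mem)
  have "N u \<le> a"
    using N_mono[OF u diff_mem[OF assms(1,2)]] by (simp add: u_def a_def)
  have f1_split: "(\<lambda>x. 1 / a * u x - f1 x) = (\<lambda>x. (1 / a - 1) * u x + (-1) * m x)"
    by (auto simp: u_def m_def algebra_simps)
  have "N (\<lambda>x. 1 / a * u x - f1 x) \<le> N (\<lambda>x. (1 / a - 1) * u x) + N (\<lambda>x. (-1) * m x)"
    unfolding f1_split using u m by (intro N_triangle scale_mem)
  also have "\<dots> = (1 / a - 1) * N u + N m"
    unfolding N_homogeneous[OF u] N_homogeneous[OF m] using a(2) by simp
  also have "\<dots> \<le> (1 / a - 1) * a + N m"
    using \<open>N u \<le> a\<close> a(2) by (simp add: mult_left_mono)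
  also have "\<dots> = 1 - a + N m"
    using a(1) by (simp add: field_simps)
  finally show ?thesis
    by (simp add: a_def u_def m_def)
qed

end

theorem lemma2p4:
  fixes M :: "'a measure" and Y :: "('a \<Rightarrow> real) set"
    and N :: "('a \<Rightarrow> real) \<Rightarrow> real" and \<delta> :: "real \<Rightarrow> real"
    and \<epsilon> :: real and f1 f2 :: "'a \<Rightarrow> real"
  assumes "banach_function_space M Y N"
    and "uniformly_monotone_modulus M Y N \<delta>"
    and "0 < \<epsilon>" and "\<epsilon> < 1"
    and "f1 \<in> Y" and "f2 \<in> Y"
    and "AE x in M. f1 x \<ge> 0" and "AE x in M. f2 x \<ge> 0"
    and "N (\<lambda>x. f1 x + f2 x) \<le> 1"
    and "1 / (1 + \<delta> (\<epsilon> / 3)) \<le> N (\<lambda>x. f1 x - f2 x)"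
  shows "\<exists>h1\<in>Y. \<exists>h2\<in>Y. (AE x in M. h1 x \<ge> 0) \<and> (AE x in M. h2 x \<ge> 0)
           \<and> (AE x in M. h1 x = 0 \<or> h2 x = 0)
           \<and> N (\<lambda>x. h1 x + h2 x) = 1
           \<and> N (\<lambda>x. h1 x - f1 x) < \<epsilon> \<and> N (\<lambda>x. h2 x - f2 x) < \<epsilon>"
proof -
  interpret bfs M Y N
    by (rule bfs.intro) (fact assms(1))
  define h1 where "h1 = (\<lambda>x. 1 / N (\<lambda>x. f1 x - f2 x) * max (f1 x - f2 x) 0)"
  define h2 where "h2 = (\<lambda>x. 1 / N (\<lambda>x. f1 x - f2 x) * max (f2 x - f1 x) 0)"
  have \<epsilon>3: "0 < \<epsilon> / 3"
    using assms(3) by simp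
  have diff_pos: "0 < N (\<lambda>x. f1 x - f2 x)"
    using uniformly_monotone_modulus_pos[OF assms(2) \<epsilon>3] assms(10)
    by (simp add: less_le_trans[rotated])
  have diff_le_1: "N (\<lambda>x. f1 x - f2 x) \<le> 1"
    using N_diff_le_N_add[OF assms(5-8)] assms(9) by simp
  have "1 - N (\<lambda>x. f1 x - f2 x) \<le> \<epsilon> / 3"
    by (rule one_sub_N_diff_le[OF assms(2) \<epsilon>3 assms(5,6) diff_le_1 assms(10)])
  moreover have "N (\<lambda>x. min (f1 x) (f2 x)) \<le> \<epsilon> / 6"
    using N_min_le_modulus[OF assms(2) \<epsilon>3 assms(5-10)] by simp
  moreover have "N (\<lambda>x. min (f2 x) (f1 x)) = N (\<lambda>x. min (f1 x) (f2 x))"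
    by (simp add: min.commute)
  ultimately have "N (\<lambda>x. h1 x - f1 x) < \<epsilon> \<and> N (\<lambda>x. h2 x - f2 x) < \<epsilon>"
    using N_positive_part_sub_le[OF assms(5,6) diff_pos diff_le_1]
      N_positive_part_sub_le[OF assms(6,5), unfolded N_diff_commute[OF assms(5,6)],
        OF diff_pos diff_le_1]
      assms(3)
    unfolding h1_def h2_def by linarith
  moreover have "h1 \<in> Y" and "h2 \<in> Y" and "AE x in M. 0 \<le> h1 x" and "AE x in M. 0 \<le> h2 x"
    and "AE x in M. h1 x = 0 \<or> h2 x = 0" and "N (\<lambda>x. h1 x + h2 x) = 1"
    unfolding h1_def h2_def by (fact normalized_positive_parts[OF assms(5,6) diff_pos])+
  ultimately show ?thesis
    by (intro bexI[of _ h1] bexI[of _ h2]) simp_all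
qed

end
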